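(* Let $n$ be the least counterexample to Robin's inequality, i.e. the least integer $n>5040$ with $\sigma(n)\ge e^{\gamma} n\log\log n$ (assuming such an integer exists). Let $p_r$ denote the largest prime divisor of $n$. Then $\log n> p_r$.
   Context: $\sigma(n)=\sum_{d\mid n} d$ is the sum-of-divisors function, $\gamma$ is the Euler–Mascheroni constant, and $\log$ is the natural logarithm. Robin's inequality (RI) for an integer $n>5040$ is $\sigma(n)<e^{\gamma} n\log\log n$. *)

theory Defs
  imports "HOL-Analysis.Analysis" "HOL-Computational_Algebra.Primes"
begin

definition sigma :: "nat \<Rightarrow> nat" where
  "sigma n = (\<Sum>d\<in>{d. d dvd n}. d)"

definition robin_ineq :: "nat \<Rightarrow> bool" where
  "robin_ineq n \<longleftrightarrow> real (sigma n) < exp euler_mascheroni * real n * ln (ln (real n))"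

end

theory Submission
  imports Defs
begin

text \<open>
  Write \<open>n = u p\<close> with \<open>p\<close> the largest prime factor of \<open>n\<close>, suppose \<open>ln n \<le> p\<close>,
  and use the abundancy \<open>\<sigma>(m)/m\<close>. Since \<open>\<sigma>(u p) \<le> \<sigma>(u) (p + 1)\<close>, passing from \<open>u\<close>
  to \<open>n\<close> multiplies the abundancy by at most \<open>1 + 1/p\<close>.

  If \<open>u > 5040\<close>, then \<open>u\<close> satisfies Robin's inequality by minimality, and \<open>ln n \<le> p\<close>
  gives \<open>(1 + 1/p) ln ln u \<le> ln ln n\<close>, so \<open>n\<close> satisfies it too.

  If \<open>u \<le> 5040\<close>, then \<open>p \<ge> ln n > 8\<close>, hence \<open>p \<ge> 11\<close>. For \<open>k < p\<close> with
  \<open>u k > 5040\<close> and a prime \<open>r\<close> dividing \<open>k\<close> but not \<open>u\<close>, the abundancy of \<open>u k\<close> is at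
  least \<open>1 + 1/r \<ge> 1 + 1/p\<close> times that of \<open>u\<close>, so Robin's inequality for \<open>u k\<close> would
  again transfer to \<open>n\<close>. With \<open>k = 10, 9, 7\<close> this forces \<open>10 | u\<close> once \<open>u > 504\<close>,
  \<open>30 | u\<close> once \<open>u > 560\<close> and \<open>210 | u\<close> once \<open>u > 720\<close>. For the few hundred
  remaining \<open>u\<close> a computation of the abundancy shows
  \<open>(12/11) \<sigma>(u)/u < e\<^sup>\<gamma> ln ln (max 5041 (11 u)) \<le> e\<^sup>\<gamma> ln ln n\<close>, which once more
  gives Robin's inequality for \<open>n\<close>.
\<close>

definition abundancy :: "nat \<Rightarrow> real" where
  "abundancy n = real (sigma n) / real n"

lemma robin_ineq_iff_abundancy:
  assumes "0 < n"
  shows "robin_ineq n \<longleftrightarrow> abundancy n < exp euler_mascheroni * ln (ln (real n))"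
  using assms by (simp add: robin_ineq_def abundancy_def divide_less_eq mult_ac)

lemma sigma_mult_prime_le:
  assumes "prime p" "0 < u"
  shows "sigma (u * p) \<le> sigma u * (p + 1)"
proof -
  let ?D = "{d. d dvd u}"
  have fin: "finite ?D"
    using assms(2) by simp
  have "{d. d dvd u * p} \<subseteq> ?D \<union> (\<lambda>d. p * d) ` ?D"
  proof
    fix d assume "d \<in> {d. d dvd u * p}"
    then obtain b c where "d = b * c" "b dvd u" "c dvd p"
      using division_decomp by blast
    moreover have "c = 1 \<or> c = p"
      using \<open>c dvd p\<close> assms(1) prime_nat_iff by blast
    ultimately show "d \<in> ?D \<union> (\<lambda>d. p * d) ` ?D"
      by (auto simp: mult.commute)
  qed
  then have "sigma (u * p) \<le> (\<Sum>d\<in>?D \<union> (\<lambda>d. p * d) ` ?D. d)"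
    unfolding sigma_def using fin by (intro sum_mono2) auto
  also have "\<dots> \<le> (\<Sum>d\<in>?D. d) + (\<Sum>d\<in>(\<lambda>d. p * d) ` ?D. d)"
    using sum_Un_nat[of ?D "(\<lambda>d. p * d) ` ?D" "\<lambda>d. d"] fin by simp
  also have "(\<Sum>d\<in>(\<lambda>d. p * d) ` ?D. d) \<le> (\<Sum>d\<in>?D. p * d)"
    using sum_image_le[of ?D "\<lambda>d. d" "\<lambda>d. p * d"] fin by (simp add: comp_def)
  also have "(\<Sum>d\<in>?D. d) + (\<Sum>d\<in>?D. p * d) = sigma u * (p + 1)"
    by (simp add: sigma_def sum.distrib sum_distrib_left algebra_simps)
  finally show ?thesis
    by simp
qed

lemma sigma_mult_ge:
  assumes "prime r" "r dvd k" "\<not> r dvd u" "0 < u" "0 < k"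
  shows "sigma u * (k + k div r) \<le> sigma (u * k)"
proof -
  let ?D = "{d. d dvd u}"
  define q where "q = k div r"
  have k: "k = r * q"
    using assms(2) q_def by simp
  have "0 < q"
    using k assms(5) by (cases q) auto
  have fin: "finite ?D"
    using assms(4) by simp
  have disjoint: "(\<lambda>d. k * d) ` ?D \<inter> (\<lambda>d. q * d) ` ?D = {}"
  proof (rule ccontr)
    assume "(\<lambda>d. k * d) ` ?D \<inter> (\<lambda>d. q * d) ` ?D \<noteq> {}"
    then obtain d d' where "d dvd u" "d' dvd u" "k * d = q * d'"
      by blast
    then have "r * d dvd u"
      using k \<open>0 < q\<close> by (simp add: mult.assoc mult.left_commute[of r q])
    then have "r dvd u"
      using dvd_mult_left by blast
    then show False
      using assms(3) by simp
  qed
  have sum_scaled: "(\<Sum>d\<in>(\<lambda>d. c * d) ` ?D. d) = c * sigma u" if "0 < c" for c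
    using that by (subst sum.reindex) (auto simp: inj_on_def sigma_def sum_distrib_left)
  have "sigma u * (k + q) = (\<Sum>d\<in>(\<lambda>d. k * d) ` ?D \<union> (\<lambda>d. q * d) ` ?D. d)"
    using sum_scaled[of k] sum_scaled[of q] assms(5) \<open>0 < q\<close> disjoint fin
    by (simp add: sum.union_disjoint algebra_simps)
  also have "\<dots> \<le> sigma (u * k)"
    unfolding sigma_def using k assms(4,5)
    by (intro sum_mono2) (auto intro: mult_dvd_mono)
  finally show ?thesis
    by (simp add: q_def)
qed

lemma abundancy_mult_prime_le:
  assumes "prime p" "0 < u"
  shows "abundancy (u * p) \<le> abundancy u * (1 + 1 / real p)"
proof -
  have "0 < p"
    using assms(1) prime_gt_0_nat by blast
  have "abundancy (u * p) \<le> real (sigma u * (p + 1)) / real (u * p)"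
    unfolding abundancy_def using sigma_mult_prime_le[OF assms]
    by (intro divide_right_mono) (simp_all only: of_nat_le_iff of_nat_0_le_iff)
  also have "\<dots> = abundancy u * (1 + 1 / real p)"
    using assms(2) \<open>0 < p\<close> by (simp add: abundancy_def field_simps)
  finally show ?thesis .
qed

lemma abundancy_mult_ge:
  assumes "prime r" "r dvd k" "\<not> r dvd u" "0 < u" "0 < k"
  shows "abundancy u * (1 + 1 / real r) \<le> abundancy (u * k)"
proof -
  have "0 < r"
    using assms(1) prime_gt_0_nat by blast
  have "abundancy u * (1 + 1 / real r) = real (sigma u * (k + k div r)) / real (u * k)"
    using assms(2,4,5) \<open>0 < r\<close> by (simp add: abundancy_def real_of_nat_div field_simps)
  also have "\<dots> \<le> abundancy (u * k)"
    unfolding abundancy_def using sigma_mult_ge[OF assms]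
    by (intro divide_right_mono) (simp_all only: of_nat_le_iff of_nat_0_le_iff)
  finally show ?thesis .
qed

lemma ln_ln_mult_ge:
  fixes u p :: real
  assumes "1 < u" "1 < p" "ln (u * p) \<le> p"
  shows "ln (ln u) * (1 + 1 / p) \<le> ln (ln (u * p))"
proof -
  have ln_mult: "ln (u * p) = ln u + ln p"
    using assms by (simp add: ln_mult)
  have "0 < ln u" "0 < ln p"
    using assms by simp_all
  have "ln (ln u / ln (u * p)) \<le> ln u / ln (u * p) - 1"
    using \<open>0 < ln u\<close> \<open>0 < ln p\<close> ln_mult by (intro ln_le_minus_one) simp
  then have gap: "ln p / ln (u * p) \<le> ln (ln (u * p)) - ln (ln u)"
    using \<open>0 < ln u\<close> \<open>0 < ln p\<close> ln_mult by (simp add: ln_div field_simps)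
  have "0 < ln (u * p)"
    using \<open>0 < ln u\<close> \<open>0 < ln p\<close> ln_mult by simp
  have "ln (ln u) \<le> ln (ln (u * p))"
    using \<open>0 < ln u\<close> \<open>0 < ln p\<close> ln_mult by (subst ln_le_cancel_iff) auto
  also have "ln (ln (u * p)) \<le> ln p"
    using \<open>0 < ln (u * p)\<close> assms(2,3) by (subst ln_le_cancel_iff) auto
  finally have "ln (ln u) / p \<le> ln p / p"
    using assms(2) by (simp add: divide_right_mono)
  also have "\<dots> \<le> ln p / ln (u * p)"
    using \<open>0 < ln p\<close> \<open>0 < ln (u * p)\<close> assms(2,3) by (intro divide_left_mono) auto
  finally have "ln (ln u) / p \<le> ln p / ln (u * p)" .
  with gap show ?thesis
    by (simp add: algebra_simps)
qed

lemma ln_ln_mono: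
  assumes "1 < m" "m \<le> n"
  shows "ln (ln (real m)) \<le> ln (ln (real n))"
proof -
  have "1 < real m" "real m \<le> real n"
    using assms by simp_all
  then show ?thesis
    by simp
qed

lemma robin_ineq_mult_large_prime:
  assumes "prime p" "1 < u" "ln (real (u * p)) \<le> real p" "robin_ineq u"
  shows "robin_ineq (u * p)"
proof -
  have "1 < real p"
    using prime_gt_1_nat[OF assms(1)] by simp
  have "abundancy (u * p) \<le> abundancy u * (1 + 1 / p)"
    using abundancy_mult_prime_le assms(1,2) by simp
  also have "\<dots> < exp euler_mascheroni * ln (ln u) * (1 + 1 / p)"
    using assms(2,4) \<open>1 < real p\<close>
    by (intro mult_strict_right_mono) (simp_all add: robin_ineq_iff_abundancy add_pos_nonneg)
  also have "\<dots> \<le> exp euler_mascheroni * ln (ln (real (u * p)))"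
    using ln_ln_mult_ge[of u p] assms(2,3) \<open>1 < real p\<close> by (simp add: mult.assoc)
  finally show ?thesis
    using assms(1,2) prime_gt_0_nat by (simp add: robin_ineq_iff_abundancy)
qed

lemma robin_ineq_mult_prime_of_factor:
  assumes "prime p" "prime r" "r dvd k" "\<not> r dvd u" "0 < u" "0 < k" "k < p"
    and "robin_ineq (u * k)"
  shows "robin_ineq (u * p)"
proof -
  have "0 < r" "r \<le> k"
    using assms(2,3,6) prime_gt_0_nat dvd_imp_le by auto
  have "1 < u * k"
    using prime_gt_1_nat[OF assms(2)] dvd_imp_le[of r "u * k"] assms(3,5,6) by simp
  have "abundancy (u * p) \<le> abundancy u * (1 + 1 / p)"
    using abundancy_mult_prime_le assms(1,5) by simp
  also have "\<dots> \<le> abundancy u * (1 + 1 / r)"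
    using \<open>0 < r\<close> \<open>r \<le> k\<close> assms(7) by (intro mult_left_mono) (auto simp: abundancy_def frac_le)
  also have "\<dots> \<le> abundancy (u * k)"
    using abundancy_mult_ge assms(2-6) .
  also have "\<dots> < exp euler_mascheroni * ln (ln (real (u * k)))"
    using assms(5,6,8) by (simp add: robin_ineq_iff_abundancy)
  also have "\<dots> \<le> exp euler_mascheroni * ln (ln (real (u * p)))"
    using \<open>1 < u * k\<close> assms(7) by (intro mult_left_mono ln_ln_mono) auto
  finally show ?thesis
    using assms(1,5) prime_gt_0_nat by (simp add: robin_ineq_iff_abundancy)
qed

lemma robin_ineq_mult_prime_of_abundancy:
  assumes "prime p" "11 \<le> p" "0 < u"
    and "12 * abundancy u < 11 * exp euler_mascheroni * ln (ln (real N))" "1 < N" "N \<le> u * p"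
  shows "robin_ineq (u * p)"
proof -
  have "abundancy (u * p) \<le> abundancy u * (1 + 1 / p)"
    using abundancy_mult_prime_le assms(1,3) by simp
  also have "\<dots> \<le> abundancy u * (12 / 11)"
    using assms(2) by (intro mult_left_mono) (auto simp: abundancy_def field_simps)
  also have "\<dots> < exp euler_mascheroni * ln (ln (real N))"
    using assms(4) by simp
  also have "\<dots> \<le> exp euler_mascheroni * ln (ln (real (u * p)))"
    using assms(5,6) by (intro mult_left_mono ln_ln_mono) auto
  finally show ?thesis
    using assms(1,3) prime_gt_0_nat by (simp add: robin_ineq_iff_abundancy)
qed

lemma exp_euler_mascheroni_ge: "71 / 40 \<le> exp (euler_mascheroni :: real)"
proof -
  have "(71 / 40 :: real) \<le> (1 + 19 / 132 + (19 / 132) ^ 2 / 2) ^ 4"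
    by (simp add: eval_nat_numeral)
  also have "\<dots> \<le> exp (19 / 132) ^ 4"
    by (intro power_mono exp_lower_Taylor_quadratic) simp_all
  also have "\<dots> = exp (19 / 33)"
    by (simp flip: exp_of_nat_mult)
  also have "\<dots> \<le> exp euler_mascheroni"
    using euler_mascheroni_gt_19_over_33 by simp
  finally show ?thesis .
qed

lemma ln_ge_272_power:
  fixes x :: real
  assumes "(272 / 100) ^ k < x"
  shows "real k + 2 * (x - (272 / 100) ^ k) / ((272 / 100) ^ k + x) \<le> ln x"
proof -
  have "real k \<le> real k * ln (272 / 100)"
    using ln_272_gt_1 mult_left_mono[of 1 "ln (272 / 100)" "real k"] by simp
  also have "\<dots> = ln ((272 / 100) ^ k)"
    by (simp add: ln_realpow)
  finally show ?thesis
    using ln_inverse_approx_ge[OF _ assms] by simp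
qed

lemma ln_ln_ge_of_ln_ge:
  fixes x L :: real
  assumes "L \<le> ln x" "(272 / 100) ^ 2 < L"
  shows "2 + 2 * (L - (272 / 100) ^ 2) / ((272 / 100) ^ 2 + L) \<le> ln (ln x)"
proof -
  have "2 + 2 * (L - (272 / 100) ^ 2) / ((272 / 100) ^ 2 + L) \<le> ln L"
    using ln_ge_272_power[OF assms(2)] by simp
  also have "\<dots> \<le> ln (ln x)"
    using assms by (subst ln_le_cancel_iff) (auto simp: power2_eq_square)
  finally show ?thesis .
qed

lemma ln_5041_ge: "17 / 2 \<le> ln (5041 :: real)"
  using ln_ge_272_power[of 8 5041] by (simp add: power_divide)

lemma ln_ln_lower_bounds:
  "21 / 10 \<le> ln (ln (5041 :: real))"
  "11 / 5 \<le> ln (ln (9240 :: real))"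
  "9 / 4 \<le> ln (ln (16170 :: real))"
  "231 / 100 \<le> ln (ln (27720 :: real))"
  "237 / 100 \<le> ln (ln (55440 :: real))"
proof -
  have ln: "912 / 100 \<le> ln (9240 :: real)" "965 / 100 \<le> ln (16170 :: real)"
    "1022 / 100 \<le> ln (27720 :: real)" "1085 / 100 \<le> ln (55440 :: real)"
    using ln_ge_272_power[of 9 9240] ln_ge_272_power[of 9 16170]
      ln_ge_272_power[of 10 27720] ln_ge_272_power[of 10 55440]
    by (simp_all add: power_divide)
  show "21 / 10 \<le> ln (ln (5041 :: real))"
    by (rule order.trans[OF _ ln_ln_ge_of_ln_ge[OF ln_5041_ge]]) (simp_all add: power_divide)
  show "11 / 5 \<le> ln (ln (9240 :: real))"
    by (rule order.trans[OF _ ln_ln_ge_of_ln_ge[OF ln(1)]]) (simp_all add: power_divide)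
  show "9 / 4 \<le> ln (ln (16170 :: real))"
    by (rule order.trans[OF _ ln_ln_ge_of_ln_ge[OF ln(2)]]) (simp_all add: power_divide)
  show "231 / 100 \<le> ln (ln (27720 :: real))"
    by (rule order.trans[OF _ ln_ln_ge_of_ln_ge[OF ln(3)]]) (simp_all add: power_divide)
  show "237 / 100 \<le> ln (ln (55440 :: real))"
    by (rule order.trans[OF _ ln_ln_ge_of_ln_ge[OF ln(4)]]) (simp_all add: power_divide)
qed

text \<open>
  For \<open>d = 1\<close> it bounds \<open>sigma u\<close> from above (a square divisor is counted twice), and
  the simplifier evaluates it in about \<open>sqrt u\<close> steps.
\<close>

function divisor_pair_sum :: "nat \<Rightarrow> nat \<Rightarrow> nat" where
  "divisor_pair_sum u d =
     (if d = 0 \<or> u < d * d then 0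
      else (if d dvd u then d + u div d else 0) + divisor_pair_sum u (d + 1))"
  by auto
termination
proof (relation "Wellfounded.measure (\<lambda>(u, d). u + 1 - d)")
  fix u d :: nat
  assume "\<not> (d = 0 \<or> u < d * d)"
  then have "d \<le> u"
    using le_square[of d] by linarith
  then show "((u, d + 1), u, d) \<in> Wellfounded.measure (\<lambda>(u, d). u + 1 - d)"
    by simp
qed auto

declare divisor_pair_sum.simps [simp del]

lemma divisor_pair_sum_stop: "u < d * d \<Longrightarrow> divisor_pair_sum u d = 0"
  by (simp add: divisor_pair_sum.simps)

lemma divisor_pair_sum_step:
  "d \<noteq> 0 \<Longrightarrow> \<not> u < d * d \<Longrightarrow>
    divisor_pair_sum u d = (if d dvd u then d + u div d else 0) + divisor_pair_sum u (d + 1)"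
  by (subst divisor_pair_sum.simps) simp

lemma divisor_pair_sum_eq:
  assumes "0 < d"
  shows "divisor_pair_sum u d = (\<Sum>e | d \<le> e \<and> e * e \<le> u \<and> e dvd u. e + u div e)"
  using assms
proof (induction u d rule: divisor_pair_sum.induct)
  case (1 u d)
  let ?E = "\<lambda>d. {e. d \<le> e \<and> e * e \<le> u \<and> e dvd u}"
  show ?case
  proof (cases "u < d * d")
    case True
    have "d * d \<le> e * e" if "d \<le> e" for e
      using that by (simp add: mult_le_mono)
    then have empty: "?E d = {}"
      using True by fastforce
    show ?thesis
      unfolding empty using True by (simp add: divisor_pair_sum_stop)
  next
    case False
    have fin: "finite (?E (d + 1))"
      by (rule finite_subset[of _ "{..u}"]) (auto intro: order.trans[OF le_square])
    have "?E d = (if d dvd u then insert d (?E (d + 1)) else ?E (d + 1))"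
      using False by (auto simp: not_less le_less Suc_le_eq)
    then show ?thesis
      using "1" False fin by (simp add: divisor_pair_sum_step)
  qed
qed

lemma sigma_le_divisor_pair_sum:
  assumes "0 < u"
  shows "sigma u \<le> divisor_pair_sum u 1"
proof -
  let ?A = "{e. 1 \<le> e \<and> e * e \<le> u \<and> e dvd u}"
  have fin: "finite ?A"
    using assms by (auto intro: finite_subset[of _ "{d. d dvd u}"])
  have "{d. d dvd u} \<subseteq> ?A \<union> (\<lambda>e. u div e) ` ?A"
  proof
    fix d assume "d \<in> {d. d dvd u}"
    then obtain e where u: "u = d * e"
      by auto
    then have "1 \<le> d" "1 \<le> e" "d dvd u" "e dvd u"
      using assms by auto
    show "d \<in> ?A \<union> (\<lambda>e. u div e) ` ?A"
    proof (cases "d * d \<le> u")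
      case True
      then show ?thesis
        using \<open>1 \<le> d\<close> \<open>d dvd u\<close> by blast
    next
      case False
      then have "e * e \<le> u"
        using u by (simp add: mult_le_mono)
      moreover have "d = u div e"
        using u \<open>1 \<le> e\<close> by simp
      ultimately show ?thesis
        using \<open>1 \<le> e\<close> \<open>e dvd u\<close> by blast
    qed
  qed
  then have "sigma u \<le> (\<Sum>d\<in>?A \<union> (\<lambda>e. u div e) ` ?A. d)"
    unfolding sigma_def using fin by (intro sum_mono2) auto
  also have "\<dots> \<le> (\<Sum>d\<in>?A. d) + (\<Sum>d\<in>(\<lambda>e. u div e) ` ?A. d)"
    using sum_Un_nat[of ?A "(\<lambda>e. u div e) ` ?A" "\<lambda>d. d"] fin by simp
  also have "(\<Sum>d\<in>(\<lambda>e. u div e) ` ?A. d) \<le> (\<Sum>e\<in>?A. u div e)"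
    using sum_image_le[of ?A "\<lambda>d. d" "\<lambda>e. u div e"] fin by (simp add: comp_def)
  also have "(\<Sum>d\<in>?A. d) + (\<Sum>e\<in>?A. u div e) = divisor_pair_sum u 1"
    by (simp add: divisor_pair_sum_eq sum.distrib)
  finally show ?thesis
    by simp
qed

lemma abundancy_lt_of_divisor_pair_sum:
  assumes "b * divisor_pair_sum u 1 < a * u" "0 < u" "0 < b"
  shows "abundancy u < real a / real b"
proof -
  have "b * sigma u < a * u"
    using sigma_le_divisor_pair_sum[OF assms(2)] assms(1,3) by (meson le_less_trans mult_le_mono2)
  then have "real b * real (sigma u) < real a * real u"
    by (metis of_nat_less_iff of_nat_mult)
  then show ?thesis
    using assms(2,3) by (simp add: abundancy_def field_simps)
qed

text \<open>
  A bounded quantifier that the simplifier unfolds one value at a time; this is much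
  cheaper than expanding \<open>\<forall>u\<in>set [a..<b]\<close>.
\<close>

function all_in_range :: "(nat \<Rightarrow> bool) \<Rightarrow> nat \<Rightarrow> nat \<Rightarrow> bool" where
  "all_in_range P a b = (if b \<le> a then True else P a \<and> all_in_range P (a + 1) b)"
  by auto
termination
  by (relation "Wellfounded.measure (\<lambda>(P, a, b). b - a)") auto

declare all_in_range.simps [simp del]

lemma all_in_range_stop: "b \<le> a \<Longrightarrow> all_in_range P a b"
  by (simp add: all_in_range.simps)

lemma all_in_range_step: "\<not> b \<le> a \<Longrightarrow> all_in_range P a b \<longleftrightarrow> P a \<and> all_in_range P (a + 1) b"
  by (subst all_in_range.simps) simp

lemma all_in_rangeD: "all_in_range P a b \<Longrightarrow> a \<le> x \<Longrightarrow> x < b \<Longrightarrow> P x"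
proof (induction P a b rule: all_in_range.induct)
  case (1 P a b)
  then have "\<not> b \<le> a"
    by simp
  then have "P a" "all_in_range P (a + 1) b"
    using "1.prems"(1) all_in_range_step[of b a P] by blast+
  then show ?case
    using "1.IH"[OF \<open>\<not> b \<le> a\<close>] "1.prems" by (cases "x = a") auto
qed

lemmas pair_sum_evaluation =
  divisor_pair_sum_stop divisor_pair_sum_step all_in_range_stop all_in_range_step

lemma pair_sum_check_1_200: "all_in_range (\<lambda>u. 8 * divisor_pair_sum u 1 < 27 * u) 1 200"
  by (simp add: pair_sum_evaluation del: One_nat_def)

lemma pair_sum_check_200_330: "all_in_range (\<lambda>u. 8 * divisor_pair_sum u 1 < 27 * u) 200 330"
  by (simp add: pair_sum_evaluation del: One_nat_def)

lemma pair_sum_check_330_430: "all_in_range (\<lambda>u. 8 * divisor_pair_sum u 1 < 27 * u) 330 430"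
  by (simp add: pair_sum_evaluation del: One_nat_def)

lemma pair_sum_check_430_505: "all_in_range (\<lambda>u. 8 * divisor_pair_sum u 1 < 27 * u) 430 505"
  by (simp add: pair_sum_evaluation del: One_nat_def)

lemma pair_sum_check_multiples:
  "all_in_range (\<lambda>t. 8 * divisor_pair_sum (10 * t) 1 < 27 * (10 * t)) 51 57"
  "all_in_range (\<lambda>t. 8 * divisor_pair_sum (30 * t) 1 < 27 * (30 * t)) 19 25"
  "all_in_range (\<lambda>t. 2 * divisor_pair_sum (210 * t) 1 < 7 * (210 * t)) 4 7"
  "all_in_range (\<lambda>t. 5 * divisor_pair_sum (210 * t) 1 < 18 * (210 * t)) 7 12"
  "all_in_range (\<lambda>t. 4 * divisor_pair_sum (210 * t) 1 < 15 * (210 * t)) 12 24"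
  "20 * divisor_pair_sum (210 * 24) 1 < 77 * (210 * 24)"
  by (simp_all add: pair_sum_evaluation del: One_nat_def)

lemma abundancy_margin:
  assumes "abundancy u < B" "12 * B \<le> 11 * (71 / 40) * L" "0 \<le> L" "L \<le> ln (ln (real N))"
    and "1 < N" "N \<le> M"
  shows "12 * abundancy u < 11 * exp euler_mascheroni * ln (ln (real M))"
proof -
  have "12 * abundancy u < 11 * (71 / 40) * L"
    using assms(1,2) by linarith
  also have "\<dots> \<le> 11 * exp euler_mascheroni * L"
    using exp_euler_mascheroni_ge assms(3) by (intro mult_right_mono) simp_all
  also have "\<dots> \<le> 11 * exp euler_mascheroni * ln (ln (real M))"
    using order.trans[OF assms(4) ln_ln_mono[OF assms(5,6)]] by (intro mult_left_mono) simp_all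
  finally show ?thesis .
qed

lemma abundancy_le_720:
  assumes "0 < u" "u \<le> 720" "504 < u \<Longrightarrow> 10 dvd u" "560 < u \<Longrightarrow> 30 dvd u"
  shows "abundancy u < 27 / 8"
proof -
  have "8 * divisor_pair_sum u 1 < 27 * u"
  proof (cases "u \<le> 504")
    case True
    then show ?thesis
      using assms(1) all_in_rangeD[OF pair_sum_check_1_200, of u]
        all_in_rangeD[OF pair_sum_check_200_330, of u] all_in_rangeD[OF pair_sum_check_330_430, of u]
        all_in_rangeD[OF pair_sum_check_430_505, of u]
      by (cases "u < 200"; cases "u < 330"; cases "u < 430") simp_all
  next
    case False
    show ?thesis
    proof (cases "u \<le> 560")
      case True
      obtain t where "u = 10 * t"
        using assms(3) False by fastforce
      then show ?thesis
        using all_in_rangeD[OF pair_sum_check_multiples(1), of t] False True by simp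
    next
      case False
      obtain t where "u = 30 * t"
        using assms(4) False by fastforce
      then show ?thesis
        using all_in_rangeD[OF pair_sum_check_multiples(2), of t] False assms(2) by simp
    qed
  qed
  then show ?thesis
    using abundancy_lt_of_divisor_pair_sum assms(1) by fastforce
qed

lemma abundancy_multiple_of_210:
  assumes "4 \<le> t" "t \<le> 24"
  shows "12 * abundancy (210 * t) < 11 * exp euler_mascheroni * ln (ln (real (11 * (210 * t))))"
proof -
  have bound: "abundancy (210 * t) < real a / real b"
    if "all_in_range (\<lambda>t. b * divisor_pair_sum (210 * t) 1 < a * (210 * t)) c d" "c \<le> t" "t < d" "0 < b"
    for a b c d
    using abundancy_lt_of_divisor_pair_sum all_in_rangeD[OF that(1-3)] assms that(4) by simp
  consider "t < 7" | "7 \<le> t" "t < 12" | "12 \<le> t" "t < 24" | "t = 24"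
    using assms(2) by linarith
  then show ?thesis
  proof cases
    case 1
    then show ?thesis
      using bound[OF pair_sum_check_multiples(3)] ln_ln_lower_bounds(2) assms(1)
      by (intro abundancy_margin[of _ "7 / 2" "11 / 5" 9240]) simp_all
  next
    case 2
    then show ?thesis
      using bound[OF pair_sum_check_multiples(4)] ln_ln_lower_bounds(3)
      by (intro abundancy_margin[of _ "18 / 5" "9 / 4" 16170]) simp_all
  next
    case 3
    then show ?thesis
      using bound[OF pair_sum_check_multiples(5)] ln_ln_lower_bounds(4)
      by (intro abundancy_margin[of _ "15 / 4" "231 / 100" 27720]) simp_all
  next
    case 4
    then show ?thesis
      using abundancy_lt_of_divisor_pair_sum[OF pair_sum_check_multiples(6)] ln_ln_lower_bounds(5)
      by (intro abundancy_margin[of _ "77 / 20" "237 / 100" 55440]) simp_all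
  qed
qed

lemma abundancy_small_cofactor:
  assumes "0 < u" "u \<le> 5040"
    and "504 < u \<Longrightarrow> 2 dvd u" "504 < u \<Longrightarrow> 5 dvd u" "560 < u \<Longrightarrow> 3 dvd u" "720 < u \<Longrightarrow> 7 dvd u"
  shows "12 * abundancy u < 11 * exp euler_mascheroni * ln (ln (real (max 5041 (11 * u))))"
proof (cases "u \<le> 720")
  case True
  have "10 dvd u" if "504 < u"
    using assms(3,4)[OF that] by presburger
  moreover have "30 dvd u" if "560 < u"
    using assms(3-5) that by presburger
  ultimately have "abundancy u < 27 / 8"
    using abundancy_le_720[OF assms(1) True] by simp
  then show ?thesis
    using ln_ln_lower_bounds(1) by (intro abundancy_margin[of _ "27 / 8" "21 / 10" 5041]) simp_all
next
  case False
  then have "210 dvd u"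
    using assms(3-6) by presburger
  then obtain t where "u = 210 * t"
    by blast
  then have "4 \<le> t" "t \<le> 24" "max 5041 (11 * u) = 11 * (210 * t)"
    using False assms(2) by simp_all
  then show ?thesis
    using abundancy_multiple_of_210 \<open>u = 210 * t\<close> by simp
qed

lemma prime_factors_Max:
  fixes n :: nat
  assumes "1 < n"
  shows "prime (Max (prime_factors n))" "Max (prime_factors n) dvd n"
proof -
  obtain q where "prime q" "q dvd n"
    using prime_factor_nat[of n] assms by auto
  then have "q \<in> prime_factors n"
    using assms by (simp add: in_prime_factors_iff)
  then have "Max (prime_factors n) \<in> prime_factors n"
    by (intro Max_in) auto
  then show "prime (Max (prime_factors n))" "Max (prime_factors n) dvd n"
    by (auto simp: in_prime_factors_iff)
qed

lemma prime_ge_11_of_ln_le: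
  assumes "prime p" "5040 < n" "ln (real n) \<le> real p"
  shows "11 \<le> p"
proof -
  have "ln 5041 \<le> ln (real n)"
    using assms(2) by simp
  then have "8 < p"
    using ln_5041_ge assms(3) by simp
  moreover have "p \<noteq> 9" "p \<noteq> 10"
    using assms(1) prime_product[of 3 3] prime_product[of 2 5] by auto
  ultimately show ?thesis
    by linarith
qed

lemma robin_ineq_mult_prime_small_cofactor:
  assumes "prime p" "11 \<le> p" "0 < u" "u \<le> 5040" "5040 < u * p"
    and minimal: "\<And>k. 5040 < u * k \<Longrightarrow> k < p \<Longrightarrow> robin_ineq (u * k)"
  shows "robin_ineq (u * p)"
proof (rule ccontr)
  assume "\<not> robin_ineq (u * p)"
  then have factor: "r dvd u" if "prime r" "r dvd k" "k \<le> 10" "5040 < u * k" for r k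
    using robin_ineq_mult_prime_of_factor[OF assms(1) that(1,2) _ assms(3)] minimal[OF that(4)]
      assms(2) that by fastforce
  have "12 * abundancy u < 11 * exp euler_mascheroni * ln (ln (real (max 5041 (11 * u))))"
    using assms(3,4) factor[of 2 10] factor[of 5 10] factor[of 3 9] factor[of 7 7]
    by (intro abundancy_small_cofactor) simp_all
  then have "robin_ineq (u * p)"
    using robin_ineq_mult_prime_of_abundancy[OF assms(1-3)] assms(2,5) by simp
  with \<open>\<not> robin_ineq (u * p)\<close> show False ..
qed

theorem theorem1:
  fixes n :: nat
  assumes "n > 5040"
    and "\<not> robin_ineq n"
    and "\<And>m. 5040 < m \<Longrightarrow> m < n \<Longrightarrow> robin_ineq m"
  shows "ln (real n) > real (Max (prime_factors n))"
proof (rule ccontr)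
  define p where "p = Max (prime_factors n)"
  assume "\<not> ln (real n) > real (Max (prime_factors n))"
  then have ln_n: "ln (real n) \<le> real p"
    by (simp add: p_def)
  have "prime p" "p dvd n"
    using prime_factors_Max assms(1) by (simp_all add: p_def)
  then obtain u where n: "n = u * p"
    by (metis dvdE mult.commute)
  with assms(1) have "0 < u"
    by (intro gr0I) simp
  have minimal: "robin_ineq (u * k)" if "5040 < u * k" "k < p" for k
    using assms(3) that n \<open>0 < u\<close> by simp
  have "robin_ineq (u * p)"
  proof (cases "5040 < u")
    case True
    then show ?thesis
      using robin_ineq_mult_large_prime[OF \<open>prime p\<close> _ _ minimal[of 1]] prime_gt_1_nat[OF \<open>prime p\<close>]
        ln_n n by simp
  next
    case False
    then show ?thesis
      using robin_ineq_mult_prime_small_cofactor[OF \<open>prime p\<close> prime_ge_11_of_ln_le[OF \<open>prime p\<close> assms(1) ln_n]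
          \<open>0 < u\<close>] minimal n assms(1) by simp
  qed
  with assms(2) n show False
    by simp
qed

end
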